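(* Consider a word $uaav$ with $a \in A$ and $|ua| = i$. Then $x_i \neq x_{i+1}$ and $y_i \neq y_{i+1}$.
   Context: $A$ is a finite alphabet. An $\mathsf{X}$-ranker is a nonempty word over $\{\mathsf{X}_a : a\in A\}$ ("go to the next $a$-position", starting with the first $a$-position) and a $\mathsf{Y}$-ranker a nonempty word over $\{\mathsf{Y}_a : a\in A\}$ ("go to the previous $a$-position", starting with the last $a$-position). The attribute of position $i$ is $(x_i,y_i)$, where $x_i$ (resp. $y_i$) is the length of a shortest $\mathsf{X}$-ranker (resp. $\mathsf{Y}$-ranker) reaching $i$. *)

theory Defs
  imports Main
begin

text \<open>Words are lists; positions are 1-indexed: position p (1 \<le> p \<le> length w)
carries the letter w ! (p - 1). A ranker is represented by the list of its letters
(X_b or Y_b is represented by b).\<close>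

fun xrun :: "'a list \<Rightarrow> 'a list \<Rightarrow> nat \<Rightarrow> nat option" where
  "xrun w [] p = Some p"
| "xrun w (b # r) p =
     (if \<exists>q. p < q \<and> q \<le> length w \<and> w ! (q - 1) = b
      then xrun w r (LEAST q. p < q \<and> q \<le> length w \<and> w ! (q - 1) = b)
      else None)"

fun yrun :: "'a list \<Rightarrow> 'a list \<Rightarrow> nat \<Rightarrow> nat option" where
  "yrun w [] p = Some p"
| "yrun w (b # r) p =
     (if \<exists>q. 1 \<le> q \<and> q < p \<and> w ! (q - 1) = b
      then yrun w r (GREATEST q. 1 \<le> q \<and> q < p \<and> w ! (q - 1) = b)
      else None)"

definition x_reaches :: "'a list \<Rightarrow> 'a list \<Rightarrow> nat \<Rightarrow> bool" where
  "x_reaches w r i \<longleftrightarrow> r \<noteq> [] \<and> xrun w r 0 = Some i"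

definition y_reaches :: "'a list \<Rightarrow> 'a list \<Rightarrow> nat \<Rightarrow> bool" where
  "y_reaches w r i \<longleftrightarrow> r \<noteq> [] \<and> yrun w r (length w + 1) = Some i"

definition xattr :: "'a list \<Rightarrow> nat \<Rightarrow> nat" where
  "xattr w i = (LEAST n. \<exists>r. length r = n \<and> x_reaches w r i)"

definition yattr :: "'a list \<Rightarrow> nat \<Rightarrow> nat" where
  "yattr w i = (LEAST n. \<exists>r. length r = n \<and> y_reaches w r i)"

end

theory Submission
  imports Defs
begin

text \<open>Let positions p and p + 1 carry the same letter a. A shortest X-ranker reaching p + 1
must end with X_a, and since p is an a-position, the position before that last step can only
be p itself; dropping the last letter therefore yields a shorter X-ranker reaching p, so
x(p) < x(p + 1). Dually, a shortest Y-ranker reaching p must step there from p + 1, so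
y(p + 1) < y(p).\<close>

lemma xrun_append:
  "xrun w (r @ s) p = (case xrun w r p of None \<Rightarrow> None | Some q \<Rightarrow> xrun w s q)"
  by (induction r arbitrary: p) auto

lemma yrun_append:
  "yrun w (r @ s) p = (case yrun w r p of None \<Rightarrow> None | Some q \<Rightarrow> yrun w s q)"
  by (induction r arbitrary: p) auto

lemma xrun_snocE:
  assumes "xrun w (r @ [b]) p = Some q"
  obtains p' where "xrun w r p = Some p'" and "xrun w [b] p' = Some q"
  using assms by (cases "xrun w r p") (auto simp: xrun_append)

lemma yrun_snocE:
  assumes "yrun w (r @ [b]) p = Some q"
  obtains p' where "yrun w r p = Some p'" and "yrun w [b] p' = Some q"
  using assms by (cases "yrun w r p") (auto simp: yrun_append)

lemma xrun_singletonD: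
  assumes "xrun w [b] p = Some q"
  shows "p < q" and "w ! (q - 1) = b" and "\<And>q'. p < q' \<Longrightarrow> q' < q \<Longrightarrow> w ! (q' - 1) \<noteq> b"
proof -
  let ?P = "\<lambda>q. p < q \<and> q \<le> length w \<and> w ! (q - 1) = b"
  have ex: "\<exists>q. ?P q" and q: "q = (LEAST q. ?P q)"
    using assms by (auto split: if_splits)
  show "p < q" and "w ! (q - 1) = b"
    using LeastI_ex[OF ex] q by simp_all
  show "w ! (q' - 1) \<noteq> b" if "p < q'" "q' < q" for q'
    using not_less_Least[of q' ?P] q that \<open>p < q\<close> LeastI_ex[OF ex] by auto
qed

lemma yrun_singletonD:
  assumes "yrun w [b] p = Some q"
  shows "q < p" and "w ! (q - 1) = b" and "\<And>q'. q < q' \<Longrightarrow> q' < p \<Longrightarrow> w ! (q' - 1) \<noteq> b"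
proof -
  let ?P = "\<lambda>q. 1 \<le> q \<and> q < p \<and> w ! (q - 1) = b"
  have ex: "\<exists>q. ?P q" and q: "q = (GREATEST q. ?P q)"
    using assms by (auto split: if_splits)
  have bounded: "\<forall>y. ?P y \<longrightarrow> y \<le> p" by auto
  have "?P q" using GreatestI_ex_nat[of ?P p] ex bounded q by auto
  then show "q < p" and "w ! (q - 1) = b" by simp_all
  show "w ! (q' - 1) \<noteq> b" if "q < q'" "q' < p" for q'
  proof
    assume "w ! (q' - 1) = b"
    then have "q' \<le> q" using Greatest_le_nat[of ?P q' p] bounded q that by auto
    then show False using that by simp
  qed
qed

lemma xrun_take: "p \<le> length w \<Longrightarrow> xrun w (take p w) 0 = Some p"
proof (induction p)
  case 0
  then show ?case by simp
next
  case (Suc p)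
  have "(LEAST q. p < q \<and> q \<le> length w \<and> w ! (q - 1) = w ! p) = Suc p"
    by (rule Least_equality) (use Suc.prems in auto)
  then have "xrun w [w ! p] p = Some (Suc p)"
    using Suc.prems by (auto intro: exI[of _ "Suc p"])
  then show ?case
    using Suc by (simp add: take_Suc_conv_app_nth xrun_append)
qed

lemma yrun_rev_drop: "k \<le> length w \<Longrightarrow> yrun w (rev (drop k w)) (length w + 1) = Some (k + 1)"
proof (induction "length w - k" arbitrary: k)
  case 0
  then show ?case by simp
next
  case (Suc n)
  then have k: "k < length w" by simp
  have IH: "yrun w (rev (drop (k + 1) w)) (length w + 1) = Some (k + 2)"
    using Suc.hyps(1)[of "k + 1"] Suc.hyps(2) k by simp
  have "(GREATEST q. 1 \<le> q \<and> q < k + 2 \<and> w ! (q - 1) = w ! k) = k + 1"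
    by (rule Greatest_equality) auto
  then have "yrun w [w ! k] (k + 2) = Some (k + 1)"
    by (auto intro: exI[of _ "k + 1"])
  then show ?case
    using IH k by (simp add: Cons_nth_drop_Suc[symmetric] yrun_append)
qed

lemma x_reaches_exists: "1 \<le> p \<Longrightarrow> p \<le> length w \<Longrightarrow> \<exists>r. x_reaches w r p"
  using xrun_take[of p w] by (auto simp: x_reaches_def intro!: exI[of _ "take p w"])

lemma y_reaches_exists: "1 \<le> p \<Longrightarrow> p \<le> length w \<Longrightarrow> \<exists>r. y_reaches w r p"
  using yrun_rev_drop[of "p - 1" w]
  by (auto simp: y_reaches_def intro!: exI[of _ "rev (drop (p - 1) w)"])

lemma xattr_le: "x_reaches w r p \<Longrightarrow> xattr w p \<le> length r"
  unfolding xattr_def by (auto intro: Least_le)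

lemma yattr_le: "y_reaches w r p \<Longrightarrow> yattr w p \<le> length r"
  unfolding yattr_def by (auto intro: Least_le)

lemma xattr_obtain:
  assumes "1 \<le> p" "p \<le> length w"
  obtains r where "x_reaches w r p" and "length r = xattr w p"
  using LeastI_ex[of "\<lambda>n. \<exists>r. length r = n \<and> x_reaches w r p"] x_reaches_exists[OF assms]
  unfolding xattr_def by blast

lemma yattr_obtain:
  assumes "1 \<le> p" "p \<le> length w"
  obtains r where "y_reaches w r p" and "length r = yattr w p"
  using LeastI_ex[of "\<lambda>n. \<exists>r. length r = n \<and> y_reaches w r p"] y_reaches_exists[OF assms]
  unfolding yattr_def by blast

lemma x_reaches_butlast_if_repeated_letter:
  assumes reach: "x_reaches w (r @ [b]) (p + 1)" and "0 < p" and same: "w ! (p - 1) = w ! p"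
  shows "x_reaches w r p"
proof -
  obtain q where q: "xrun w r 0 = Some q" and step: "xrun w [b] q = Some (p + 1)"
    using reach by (auto simp: x_reaches_def elim: xrun_snocE)
  have "b = w ! p" using xrun_singletonD(2)[OF step] by simp
  have "q = p"
  proof (rule ccontr)
    assume "q \<noteq> p"
    then have "q < p" using xrun_singletonD(1)[OF step] by simp
    then show False
      using xrun_singletonD(3)[OF step, of p] same \<open>b = w ! p\<close> by simp
  qed
  moreover have "r \<noteq> []" using q \<open>q = p\<close> \<open>0 < p\<close> by auto
  ultimately show ?thesis using q by (simp add: x_reaches_def)
qed

lemma y_reaches_butlast_if_repeated_letter:
  assumes reach: "y_reaches w (r @ [b]) p" and "p + 1 \<le> length w"
    and same: "w ! (p - 1) = w ! p"
  shows "y_reaches w r (p + 1)"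
proof -
  obtain q where q: "yrun w r (length w + 1) = Some q" and step: "yrun w [b] q = Some p"
    using reach by (auto simp: y_reaches_def elim: yrun_snocE)
  have "b = w ! (p - 1)" using yrun_singletonD(2)[OF step] by simp
  have "q = p + 1"
  proof (rule ccontr)
    assume "q \<noteq> p + 1"
    then have "p + 1 < q" using yrun_singletonD(1)[OF step] by simp
    then show False
      using yrun_singletonD(3)[OF step, of "p + 1"] same \<open>b = w ! (p - 1)\<close> by simp
  qed
  moreover have "r \<noteq> []" using q \<open>q = p + 1\<close> \<open>p + 1 \<le> length w\<close> by auto
  ultimately show ?thesis using q by (simp add: y_reaches_def)
qed

lemma xattr_less_if_repeated_letter:
  assumes "0 < p" "p + 1 \<le> length w" "w ! (p - 1) = w ! p"
  shows "xattr w p < xattr w (p + 1)"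
proof -
  obtain r where reach: "x_reaches w r (p + 1)" and len: "length r = xattr w (p + 1)"
    using xattr_obtain[of "p + 1" w] assms by auto
  obtain r' b where "r = r' @ [b]"
    using reach by (cases r rule: rev_exhaust) (auto simp: x_reaches_def)
  then have "x_reaches w r' p"
    using x_reaches_butlast_if_repeated_letter[of w r' b p] reach assms by simp
  then have "xattr w p \<le> length r'" by (rule xattr_le)
  then show ?thesis using len \<open>r = r' @ [b]\<close> by simp
qed

lemma yattr_less_if_repeated_letter:
  assumes "0 < p" "p + 1 \<le> length w" "w ! (p - 1) = w ! p"
  shows "yattr w (p + 1) < yattr w p"
proof -
  obtain r where reach: "y_reaches w r p" and len: "length r = yattr w p"
    using yattr_obtain[of p w] assms by auto
  obtain r' b where "r = r' @ [b]"
    using reach by (cases r rule: rev_exhaust) (auto simp: y_reaches_def)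
  then have "y_reaches w r' (p + 1)"
    using y_reaches_butlast_if_repeated_letter[of w r' b p] reach assms by simp
  then have "yattr w (p + 1) \<le> length r'" by (rule yattr_le)
  then show ?thesis using len \<open>r = r' @ [b]\<close> by simp
qed

theorem lemma19:
  fixes u v :: "'a::finite list" and a :: 'a and i :: nat
  assumes "length (u @ [a]) = i"
  shows "xattr (u @ [a, a] @ v) i \<noteq> xattr (u @ [a, a] @ v) (i + 1)
       \<and> yattr (u @ [a, a] @ v) i \<noteq> yattr (u @ [a, a] @ v) (i + 1)"
proof -
  let ?w = "u @ [a, a] @ v"
  have i: "i = length u + 1" using assms by simp
  have repeated: "0 < i" "i + 1 \<le> length ?w" "?w ! (i - 1) = ?w ! i"
    using i by (simp_all add: nth_append)
  have "xattr ?w i < xattr ?w (i + 1)"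
    using repeated by (rule xattr_less_if_repeated_letter)
  moreover have "yattr ?w (i + 1) < yattr ?w i"
    using repeated by (rule yattr_less_if_repeated_letter)
  ultimately show ?thesis by simp
qed

end
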